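(* Let $H$ be a homogeneous relation on a finite set $V$. If $H$ fulfills A2 or A3, then $\mathcal F_H$ is a weakly partitive family. If $H$ fulfills A1, then $\mathcal F_H$ is a partitive family.
   Context: $V$ is a finite set. A reflectless triple is a triple $(x,y,z)\in V^3$ with $x\neq y$ and $x\neq z$, written $(x|yz)$. A homogeneous relation $H$ on $V$ is a set of reflectless triples (we write $H(s|xy)$ when $(s|xy)\in H$, and $H(s|xy)$ is considered false when $(s|xy)$ is not reflectless) such that for every $s\in V$ the binary relation $H_s=\{(x,y): H(s|xy)\}$ is an equivalence relation on $V\setminus\{s\}$. For $X\subseteq V$ and $s\notin X$, $s$ distinguishes $X$ if there are $x,y\in X$ with not $H(s|xy)$. A homogeneous set is a nonempty $M\subseteq V$ such that no element of $V\setminus M$ distinguishes $M$; $\mathcal F_H$ denotes the family of homogeneous sets. Axioms (required for all elements for which every triple appearing is reflectless): A1: $H(x|yz)\wedge H(y|xz)\Rightarrow H(z|xy)$. A2: $H(x|st)\wedge H(y|st)\wedge H(t|xy)\Rightarrow H(s|xy)$. A3: $H(x|st)\wedge H(y|st)\wedge H(t|sx)\wedge H(t|sy)\Rightarrow H(s|xy)$. Two sets $A,B$ overlap if $A\cap B$, $A\setminus B$, $B\setminus A$ are all nonempty. A family $\mathcal F\subseteq\mathcal P(V)$ is weakly partitive if it contains $V$ and every singleton $\{v\}$, $v\in V$, and for all overlapping $A,B\in\mathcal F$ the sets $A\cap B$, $A\cup B$, $A\setminus B$ belong to $\mathcal F$. It is partitive if moreover for all overlapping $A,B\in\mathcal F$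 the symmetric difference $A\Delta B=(A\setminus B)\cup(B\setminus A)$ belongs to $\mathcal F$. *)

theory Defs
  imports Main
begin

text \<open>Triples (x,y,z) represent (x|yz). A triple is reflectless if x \<noteq> y and x \<noteq> z.\<close>

definition reflectless :: "'a \<times> 'a \<times> 'a \<Rightarrow> bool" where
  "reflectless t = (case t of (x, y, z) \<Rightarrow> x \<noteq> y \<and> x \<noteq> z)"

definition Hrel :: "('a \<times> 'a \<times> 'a) set \<Rightarrow> 'a \<Rightarrow> 'a \<Rightarrow> 'a \<Rightarrow> bool" where
  "Hrel H s x y = ((s, x, y) \<in> H \<and> reflectless (s, x, y))"

definition homogeneous_relation :: "'a set \<Rightarrow> ('a \<times> 'a \<times> 'a) set \<Rightarrow> bool" where
  "homogeneous_relation V H =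
     (H \<subseteq> V \<times> V \<times> V \<and> (\<forall>t\<in>H. reflectless t) \<and>
      (\<forall>s\<in>V. equiv (V - {s}) {(x, y). Hrel H s x y}))"

definition distinguishes :: "('a \<times> 'a \<times> 'a) set \<Rightarrow> 'a \<Rightarrow> 'a set \<Rightarrow> bool" where
  "distinguishes H s X = (s \<notin> X \<and> (\<exists>x\<in>X. \<exists>y\<in>X. \<not> Hrel H s x y))"

definition homogeneous_sets :: "'a set \<Rightarrow> ('a \<times> 'a \<times> 'a) set \<Rightarrow> 'a set set" where
  "homogeneous_sets V H =
     {M. M \<noteq> {} \<and> M \<subseteq> V \<and> (\<forall>s\<in>V - M. \<not> distinguishes H s M)}"

definition axiom_A1 :: "'a set \<Rightarrow> ('a \<times> 'a \<times> 'a) set \<Rightarrow> bool" where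
  "axiom_A1 V H = (\<forall>x\<in>V. \<forall>y\<in>V. \<forall>z\<in>V.
     x \<noteq> y \<and> x \<noteq> z \<and> y \<noteq> z \<longrightarrow>
     Hrel H x y z \<and> Hrel H y x z \<longrightarrow> Hrel H z x y)"

definition axiom_A2 :: "'a set \<Rightarrow> ('a \<times> 'a \<times> 'a) set \<Rightarrow> bool" where
  "axiom_A2 V H = (\<forall>x\<in>V. \<forall>y\<in>V. \<forall>s\<in>V. \<forall>t\<in>V.
     x \<noteq> s \<and> x \<noteq> t \<and> y \<noteq> s \<and> y \<noteq> t \<longrightarrow>
     Hrel H x s t \<and> Hrel H y s t \<and> Hrel H t x y \<longrightarrow> Hrel H s x y)"

definition axiom_A3 :: "'a set \<Rightarrow> ('a \<times> 'a \<times> 'a) set \<Rightarrow> bool" where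
  "axiom_A3 V H = (\<forall>x\<in>V. \<forall>y\<in>V. \<forall>s\<in>V. \<forall>t\<in>V.
     x \<noteq> s \<and> x \<noteq> t \<and> y \<noteq> s \<and> y \<noteq> t \<and> t \<noteq> s \<longrightarrow>
     Hrel H x s t \<and> Hrel H y s t \<and> Hrel H t s x \<and> Hrel H t s y \<longrightarrow> Hrel H s x y)"

definition overlap :: "'a set \<Rightarrow> 'a set \<Rightarrow> bool" where
  "overlap A B = (A \<inter> B \<noteq> {} \<and> A - B \<noteq> {} \<and> B - A \<noteq> {})"

definition weakly_partitive :: "'a set \<Rightarrow> 'a set set \<Rightarrow> bool" where
  "weakly_partitive V F =
     (F \<subseteq> Pow V \<and> V \<in> F \<and> (\<forall>v\<in>V. {v} \<in> F) \<and>
      (\<forall>A\<in>F. \<forall>B\<in>F. overlap A B \<longrightarrow> A \<inter> B \<in> F \<and> A \<union> B \<in> F \<and> A - B \<in> F))"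

definition partitive :: "'a set \<Rightarrow> 'a set set \<Rightarrow> bool" where
  "partitive V F =
     (weakly_partitive V F \<and>
      (\<forall>A\<in>F. \<forall>B\<in>F. overlap A B \<longrightarrow> (A - B) \<union> (B - A) \<in> F))"

end

theory Submission
  imports Defs
begin

text \<open>Closure under intersection and union holds for every homogeneous relation, because outside
  points see a common element of the two sets. The axioms are only needed at a point
  \<open>s \<in> A \<inter> B\<close>, which must not distinguish the pieces of \<open>A \<Delta> B\<close>: pick \<open>t \<in> B - A\<close> and
  \<open>x, y \<in> A - B\<close>; homogeneity of \<open>A\<close> and \<open>B\<close> gives \<open>H(x|st)\<close>, \<open>H(y|st)\<close>, \<open>H(t|xy)\<close>,
  \<open>H(t|sx)\<close>, \<open>H(t|sy)\<close>, from which A2 or A3 yields \<open>H(s|xy)\<close> directly, while A1 applied to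
  \<open>H(x|ts)\<close> and \<open>H(t|xs)\<close> yields \<open>H(s|xt)\<close>, so that \<open>s\<close> sees all of \<open>A \<Delta> B\<close> as one class.\<close>

lemma homogeneous_relation_equiv:
  assumes "homogeneous_relation V H" "s \<in> V"
  shows "equiv (V - {s}) {(x, y). Hrel H s x y}"
  using assms unfolding homogeneous_relation_def by blast

lemma Hrel_in_V:
  assumes "homogeneous_relation V H" "Hrel H s x y"
  shows "s \<in> V"
  using assms unfolding homogeneous_relation_def Hrel_def by blast

lemma Hrel_refl:
  assumes "homogeneous_relation V H" "s \<in> V" "x \<in> V" "x \<noteq> s"
  shows "Hrel H s x x"
  using homogeneous_relation_equiv[OF assms(1,2)] assms(3,4)
  by (auto simp: equiv_def refl_on_def)

lemma Hrel_sym: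
  assumes "homogeneous_relation V H" "Hrel H s x y"
  shows "Hrel H s y x"
  using homogeneous_relation_equiv[OF assms(1) Hrel_in_V[OF assms]] assms(2)
  by (auto simp: equiv_def sym_def)

lemma Hrel_trans:
  assumes "homogeneous_relation V H" "Hrel H s x y" "Hrel H s y z"
  shows "Hrel H s x z"
  using homogeneous_relation_equiv[OF assms(1) Hrel_in_V[OF assms(1,2)]] assms(2,3)
  unfolding equiv_def trans_def by blast

lemma homogeneous_setsI:
  assumes "M \<noteq> {}" "M \<subseteq> V"
    and "\<And>s x y. s \<in> V \<Longrightarrow> s \<notin> M \<Longrightarrow> x \<in> M \<Longrightarrow> y \<in> M \<Longrightarrow> Hrel H s x y"
  shows "M \<in> homogeneous_sets V H"
  using assms unfolding homogeneous_sets_def distinguishes_def by blast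

lemma homogeneous_setsD:
  assumes "M \<in> homogeneous_sets V H" "s \<in> V" "s \<notin> M" "x \<in> M" "y \<in> M"
  shows "Hrel H s x y"
  using assms unfolding homogeneous_sets_def distinguishes_def by blast

lemma homogeneous_sets_subset: "M \<in> homogeneous_sets V H \<Longrightarrow> M \<subseteq> V"
  unfolding homogeneous_sets_def by blast

lemma ground_set_in_homogeneous_sets: "V \<noteq> {} \<Longrightarrow> V \<in> homogeneous_sets V H"
  by (rule homogeneous_setsI) auto

lemma singleton_in_homogeneous_sets:
  assumes "homogeneous_relation V H" "v \<in> V"
  shows "{v} \<in> homogeneous_sets V H"
  using assms by (intro homogeneous_setsI) (auto intro: Hrel_refl)

lemma homogeneous_sets_Int:
  assumes A: "A \<in> homogeneous_sets V H" and B: "B \<in> homogeneous_sets V H" and "A \<inter> B \<noteq> {}"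
  shows "A \<inter> B \<in> homogeneous_sets V H"
proof (rule homogeneous_setsI)
  show "A \<inter> B \<noteq> {}" "A \<inter> B \<subseteq> V"
    using assms homogeneous_sets_subset[OF A] by auto
  fix s x y assume "s \<in> V" "s \<notin> A \<inter> B" "x \<in> A \<inter> B" "y \<in> A \<inter> B"
  then show "Hrel H s x y" using homogeneous_setsD[OF A] homogeneous_setsD[OF B] by blast
qed

lemma homogeneous_sets_Un:
  assumes hr: "homogeneous_relation V H"
    and A: "A \<in> homogeneous_sets V H" and B: "B \<in> homogeneous_sets V H" and "A \<inter> B \<noteq> {}"
  shows "A \<union> B \<in> homogeneous_sets V H"
proof (rule homogeneous_setsI)
  show "A \<union> B \<noteq> {}" "A \<union> B \<subseteq> V"
    using assms homogeneous_sets_subset[OF A] homogeneous_sets_subset[OF B] by auto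
  obtain c where c: "c \<in> A" "c \<in> B" using \<open>A \<inter> B \<noteq> {}\<close> by blast
  fix s x y assume s: "s \<in> V" "s \<notin> A \<union> B" and xy: "x \<in> A \<union> B" "y \<in> A \<union> B"
  have "Hrel H s x c" "Hrel H s c y"
    using xy c s homogeneous_setsD[OF A] homogeneous_setsD[OF B] by blast+
  then show "Hrel H s x y" using Hrel_trans[OF hr] by blast
qed

lemma homogeneous_sets_Diff:
  assumes A: "A \<in> homogeneous_sets V H" and "A - B \<noteq> {}"
    and inner: "\<And>s x y. s \<in> A \<inter> B \<Longrightarrow> x \<in> A - B \<Longrightarrow> y \<in> A - B \<Longrightarrow> Hrel H s x y"
  shows "A - B \<in> homogeneous_sets V H"
proof (rule homogeneous_setsI)
  show "A - B \<noteq> {}" "A - B \<subseteq> V"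
    using assms homogeneous_sets_subset[OF A] by auto
  fix s x y assume "s \<in> V" "s \<notin> A - B" "x \<in> A - B" "y \<in> A - B"
  then show "Hrel H s x y" using homogeneous_setsD[OF A] inner by blast
qed

lemma Hrel_Diff_A2_A3:
  assumes ax: "axiom_A2 V H \<or> axiom_A3 V H"
    and A: "A \<in> homogeneous_sets V H" and B: "B \<in> homogeneous_sets V H"
    and s: "s \<in> A \<inter> B" and x: "x \<in> A - B" and y: "y \<in> A - B" and t: "t \<in> B - A"
  shows "Hrel H s x y"
proof -
  have V: "s \<in> V" "x \<in> V" "y \<in> V" "t \<in> V"
    using s x y t homogeneous_sets_subset[OF A] homogeneous_sets_subset[OF B] by auto
  have "Hrel H x s t" "Hrel H y s t"
    using homogeneous_setsD[OF B] V s x y t by auto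
  moreover have "Hrel H t x y" "Hrel H t s x" "Hrel H t s y"
    using homogeneous_setsD[OF A] V s x y t by auto
  moreover have "x \<noteq> s" "x \<noteq> t" "y \<noteq> s" "y \<noteq> t" "t \<noteq> s" using s x y t by auto
  ultimately show ?thesis using ax V unfolding axiom_A2_def axiom_A3_def by blast
qed

lemma Hrel_across_A1:
  assumes a1: "axiom_A1 V H"
    and A: "A \<in> homogeneous_sets V H" and B: "B \<in> homogeneous_sets V H"
    and s: "s \<in> A \<inter> B" and x: "x \<in> A - B" and t: "t \<in> B - A"
  shows "Hrel H s x t"
proof -
  have V: "s \<in> V" "x \<in> V" "t \<in> V"
    using s x t homogeneous_sets_subset[OF A] homogeneous_sets_subset[OF B] by auto
  have "Hrel H x t s" using homogeneous_setsD[OF B] V s x t by auto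
  moreover have "Hrel H t x s" using homogeneous_setsD[OF A] V s x t by auto
  moreover have "x \<noteq> t" "x \<noteq> s" "t \<noteq> s" using s x t by auto
  ultimately show ?thesis using a1 V unfolding axiom_A1_def by blast
qed

lemma Hrel_Diff_A1:
  assumes hr: "homogeneous_relation V H" and a1: "axiom_A1 V H"
    and A: "A \<in> homogeneous_sets V H" and B: "B \<in> homogeneous_sets V H"
    and s: "s \<in> A \<inter> B" and x: "x \<in> A - B" and y: "y \<in> A - B" and t: "t \<in> B - A"
  shows "Hrel H s x y"
  using Hrel_across_A1[OF a1 A B s x t] Hrel_sym[OF hr Hrel_across_A1[OF a1 A B s y t]]
  by (rule Hrel_trans[OF hr])

lemma homogeneous_sets_sym_diff_A1:
  assumes hr: "homogeneous_relation V H" and a1: "axiom_A1 V H"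
    and A: "A \<in> homogeneous_sets V H" and B: "B \<in> homogeneous_sets V H" and ov: "overlap A B"
  shows "(A - B) \<union> (B - A) \<in> homogeneous_sets V H"
proof (rule homogeneous_setsI)
  show "(A - B) \<union> (B - A) \<noteq> {}" "(A - B) \<union> (B - A) \<subseteq> V"
    using ov homogeneous_sets_subset[OF A] homogeneous_sets_subset[OF B]
    unfolding overlap_def by auto
  obtain u t where u: "u \<in> A - B" and t: "t \<in> B - A" using ov unfolding overlap_def by blast
  fix s x y assume s: "s \<in> V" "s \<notin> (A - B) \<union> (B - A)"
    and xy: "x \<in> (A - B) \<union> (B - A)" "y \<in> (A - B) \<union> (B - A)"
  show "Hrel H s x y"
  proof (cases "s \<in> A")
    case False
    have AB: "A \<union> B \<in> homogeneous_sets V H"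
      using homogeneous_sets_Un[OF hr A B] ov unfolding overlap_def by blast
    have "s \<notin> A \<union> B" "x \<in> A \<union> B" "y \<in> A \<union> B" using False s xy by auto
    then show ?thesis by (rule homogeneous_setsD[OF AB s(1)])
  next
    case True
    with s have sAB: "s \<in> A \<inter> B" and sBA: "s \<in> B \<inter> A" by auto
    have across: "Hrel H s a b" if "a \<in> A - B" "b \<in> B - A" for a b
      using Hrel_across_A1[OF a1 A B sAB that] .
    have "Hrel H s a b" if "a \<in> B - A" "b \<in> A - B" for a b
      using Hrel_sym[OF hr across[OF that(2,1)]] .
    moreover have "Hrel H s a b" if "a \<in> A - B" "b \<in> A - B" for a b
      using Hrel_Diff_A1[OF hr a1 A B sAB that t] .
    moreover have "Hrel H s a b" if "a \<in> B - A" "b \<in> B - A" for a b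
      using Hrel_Diff_A1[OF hr a1 B A sBA that u] .
    ultimately show ?thesis using xy across by (elim UnE) blast+
  qed
qed

lemma homogeneous_sets_Diff_A2_A3:
  assumes ax: "axiom_A2 V H \<or> axiom_A3 V H"
    and A: "A \<in> homogeneous_sets V H" and B: "B \<in> homogeneous_sets V H"
    and "A - B \<noteq> {}" and "B - A \<noteq> {}"
  shows "A - B \<in> homogeneous_sets V H"
proof -
  obtain t where t: "t \<in> B - A" using \<open>B - A \<noteq> {}\<close> by blast
  show ?thesis
    by (rule homogeneous_sets_Diff[OF A \<open>A - B \<noteq> {}\<close>]) (rule Hrel_Diff_A2_A3[OF ax A B _ _ _ t])
qed

lemma homogeneous_sets_Diff_A1:
  assumes hr: "homogeneous_relation V H" and a1: "axiom_A1 V H"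
    and A: "A \<in> homogeneous_sets V H" and B: "B \<in> homogeneous_sets V H"
    and "A - B \<noteq> {}" and "B - A \<noteq> {}"
  shows "A - B \<in> homogeneous_sets V H"
proof -
  obtain t where t: "t \<in> B - A" using \<open>B - A \<noteq> {}\<close> by blast
  show ?thesis
    by (rule homogeneous_sets_Diff[OF A \<open>A - B \<noteq> {}\<close>]) (rule Hrel_Diff_A1[OF hr a1 A B _ _ _ t])
qed

lemma weakly_partitive_homogeneous_setsI:
  assumes hr: "homogeneous_relation V H" and "V \<noteq> {}"
    and Diff: "\<And>A B. A \<in> homogeneous_sets V H \<Longrightarrow> B \<in> homogeneous_sets V H \<Longrightarrow>
      A - B \<noteq> {} \<Longrightarrow> B - A \<noteq> {} \<Longrightarrow> A - B \<in> homogeneous_sets V H"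
  shows "weakly_partitive V (homogeneous_sets V H)"
  unfolding weakly_partitive_def
proof (intro conjI ballI impI)
  show "homogeneous_sets V H \<subseteq> Pow V" using homogeneous_sets_subset by blast
  show "V \<in> homogeneous_sets V H" using \<open>V \<noteq> {}\<close> by (rule ground_set_in_homogeneous_sets)
  show "{v} \<in> homogeneous_sets V H" if "v \<in> V" for v
    using singleton_in_homogeneous_sets[OF hr that] .
  fix A B assume A: "A \<in> homogeneous_sets V H" and B: "B \<in> homogeneous_sets V H"
    and "overlap A B"
  then have "A \<inter> B \<noteq> {}" "A - B \<noteq> {}" "B - A \<noteq> {}" unfolding overlap_def by auto
  then show "A \<inter> B \<in> homogeneous_sets V H" "A \<union> B \<in> homogeneous_sets V H"
    "A - B \<in> homogeneous_sets V H"
    using homogeneous_sets_Int[OF A B] homogeneous_sets_Un[OF hr A B] Diff[OF A B] by auto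
qed

theorem mainTheorem8:
  fixes V :: "'a set" and H :: "('a \<times> 'a \<times> 'a) set"
  assumes "finite V" and "V \<noteq> {}" and "homogeneous_relation V H"
  shows "(axiom_A2 V H \<or> axiom_A3 V H \<longrightarrow> weakly_partitive V (homogeneous_sets V H))
       \<and> (axiom_A1 V H \<longrightarrow> partitive V (homogeneous_sets V H))"
proof (intro conjI impI)
  assume "axiom_A2 V H \<or> axiom_A3 V H"
  then show "weakly_partitive V (homogeneous_sets V H)"
    using weakly_partitive_homogeneous_setsI[OF assms(3,2)] homogeneous_sets_Diff_A2_A3
    by blast
next
  assume a1: "axiom_A1 V H"
  then have "weakly_partitive V (homogeneous_sets V H)"
    using weakly_partitive_homogeneous_setsI[OF assms(3,2)] homogeneous_sets_Diff_A1[OF assms(3)]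
    by blast
  then show "partitive V (homogeneous_sets V H)"
    unfolding partitive_def using homogeneous_sets_sym_diff_A1[OF assms(3) a1] by blast
qed

end
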